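(* Assume $F$ satisfies (F1), (F2), (F3). An upper semicontinuous function $u:\mathbb R^n\times(0,+\infty)\to\mathbb R$ is a viscosity subsolution of $u_t+F(x,t,Xu,X^2u)=0$ if and only if for every $\phi\in C^2(\mathbb R^n\times(0,+\infty))$ and every local maximum point $(x,t)$ of $u-\phi$, $$\partial_t\phi(x,t)+F_*(x,t,X\phi(x,t),X^2\phi(x,t))\le0 .$$ Analogously, a lower semicontinuous $u$ is a viscosity supersolution if and only if for every $\phi\in C^2$ and every local minimum point $(x,t)$ of $u-\phi$, $\partial_t\phi(x,t)+F^*(x,t,X\phi(x,t),X^2\phi(x,t))\ge0$.
   Context: Step two Carnot group setting. Write $\mathbb R^n=\mathbb R^m\times\mathbb R^{n-m}$ with $2\le m<n$ and points $x=(x_h,x_v)$. Fix $n-m$ linearly independent skew-symmetric $m\times m$ real matrices $B^{(1)},\dots,B^{(n-m)}$. Let $\sigma(x)$ be the $n\times m$ matrix whose first $m$ rows form $I_m$ and whose $(m+k)$-th row is ${}^t(B^{(k)}x_h)$. The vector fields are $X_j=\sum_{i}\sigma_{ij}(x)\partial_i$, $j=1,\dots,m$. For $u\in C^2$, $Xu=\nabla u\,\sigma(x)$ (row vector) and $X^2u={}^t\sigma(x)D^2u\,\sigma(x)$. $\mathcal S^m$ is the set of real symmetric $m\times m$ matrices. Standing assumptions on $F$: $F:\mathbb R^n\times(0,+\infty)\times(\mathbb R^m\setminus\{0\})\times\mathcal S^m\to\mathbb R$ is continuous and locally bounded near points of the form $(x,t,0,A)$; $F_*(x,t,0,A)=\lim_{r\to0^+}\inf\{F(y,t,q,B):q\ne0,\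 |(y,q,B)-(x,0,A)|\le r\}$ and $F^*$ analogously with $\sup$ (for $q\ne0$, $F_*=F^*=F$). (F1) $F^*(x,t,0,\mathbb O)=F_*(x,t,0,\mathbb O)$ for all $(x,t)$. (F2) $F(x,t,p,A)\le F(x,t,p,B)$ whenever $A\ge B$. (F3) $F(x,t,\lambda p,\lambda A+\mu\,p\otimes p)=\lambda F(x,t,p,A)$ for all $\lambda>0$, $\mu\in\mathbb R$. Associated operator: $G(x,t,p,A)=F(x,t,p\sigma(x),{}^t\sigma(x)A\sigma(x))$ for $p\in\mathbb R^n$ with $p\sigma(x)\ne0$, $A\in\mathcal S^n$; $G_*,G^*$ are its lower/upper semicontinuous envelopes on all of $\mathbb R^n\times(0,\infty)\times\mathbb R^n\times\mathcal S^n$. Viscosity solutions: an upper semicontinuous $u$ is a subsolution if for every $\phi\in C^2$ and every local maximum point $(x,t)$ of $u-\phi$, $\phi_t+G_*(x,t,\nabla\phi,D^2\phi)\le0$ at $(x,t)$; a lower semicontinuous $u$ is a supersolution if for every local minimum point of $u-\phi$, $\phi_t+G^*(x,t,\nabla\phi,D^2\phi)\ge0$ there. *)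

theory Defs
  imports "HOL-Analysis.Analysis"
begin

text \<open>Step two Carnot group on R^n = R^m x R^(n-m).  Horizontal coordinates are
indexed by the finite type 'm, vertical ones by 'k (so n - m = CARD('k) \<ge> 1), and
a point of R^n is a vector indexed by the sum type 'm + 'k.\<close>

type_synonym ('m,'k) pt = "real ^ ('m + 'k)"

definition hor :: "('m::finite,'k::finite) pt \<Rightarrow> real ^ 'm" where
  "hor x = (\<chi> i. x $ Inl i)"

definition symm_mat :: "real ^ 'a ^ 'a \<Rightarrow> bool" where
  "symm_mat A \<longleftrightarrow> transpose A = A"

definition skew_mat :: "real ^ 'a ^ 'a \<Rightarrow> bool" where
  "skew_mat A \<longleftrightarrow> transpose A = - A"

definition mat_ge :: "real ^ 'a ^ 'a \<Rightarrow> real ^ 'a ^ 'a \<Rightarrow> bool" where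
  "mat_ge A B \<longleftrightarrow> (\<forall>\<xi>. \<xi> \<bullet> ((A - B) *v \<xi>) \<ge> 0)"

definition outer :: "real ^ 'a \<Rightarrow> real ^ 'a ^ 'a" where
  "outer p = (\<chi> i j. p $ i * p $ j)"

definition lin_indep_family :: "('k::finite \<Rightarrow> real ^ 'm ^ 'm) \<Rightarrow> bool" where
  "lin_indep_family B \<longleftrightarrow> (\<forall>c. (\<Sum>k\<in>UNIV. c k *\<^sub>R B k) = 0 \<longrightarrow> (\<forall>k. c k = 0))"

definition sigma :: "('k::finite \<Rightarrow> real ^ 'm ^ 'm) \<Rightarrow> ('m::finite,'k) pt \<Rightarrow> real ^ 'm ^ ('m + 'k)" where
  "sigma B x = (\<chi> r j. case r of Inl i \<Rightarrow> (if i = j then 1 else 0)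
                                | Inr k \<Rightarrow> (B k *v hor x) $ j)"

text \<open>Lower / upper envelopes of F at q = 0 (t fixed, as in the definition of F_*),
with F_* = F^* = F for q \<noteq> 0.\<close>
definition F_low :: "(('m::finite,'k::finite) pt \<Rightarrow> real \<Rightarrow> real^'m \<Rightarrow> real^'m^'m \<Rightarrow> real)
     \<Rightarrow> ('m,'k) pt \<Rightarrow> real \<Rightarrow> real^'m \<Rightarrow> real^'m^'m \<Rightarrow> real" where
  "F_low F x t q A = (if q \<noteq> 0 then F x t q A else
     Lim (at_right 0) (\<lambda>r. Inf {F y t q' B' | y q' B'. q' \<noteq> 0 \<and> symm_mat B' \<and>
                                  dist ((y, q'), B') ((x, 0), A) \<le> r}))"

definition F_up :: "(('m::finite,'k::finite) pt \<Rightarrow> real \<Rightarrow> real^'m \<Rightarrow> real^'m^'m \<Rightarrow> real)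
     \<Rightarrow> ('m,'k) pt \<Rightarrow> real \<Rightarrow> real^'m \<Rightarrow> real^'m^'m \<Rightarrow> real" where
  "F_up F x t q A = (if q \<noteq> 0 then F x t q A else
     Lim (at_right 0) (\<lambda>r. Sup {F y t q' B' | y q' B'. q' \<noteq> 0 \<and> symm_mat B' \<and>
                                  dist ((y, q'), B') ((x, 0), A) \<le> r}))"

definition G_op :: "('k::finite \<Rightarrow> real ^ 'm ^ 'm)
     \<Rightarrow> (('m::finite,'k) pt \<Rightarrow> real \<Rightarrow> real^'m \<Rightarrow> real^'m^'m \<Rightarrow> real)
     \<Rightarrow> ('m,'k) pt \<Rightarrow> real \<Rightarrow> ('m,'k) pt \<Rightarrow> real^('m+'k)^('m+'k) \<Rightarrow> real" where
  "G_op B F x t p A = F x t (p v* sigma B x) (transpose (sigma B x) ** A ** sigma B x)"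

definition G_low :: "('k::finite \<Rightarrow> real ^ 'm ^ 'm)
     \<Rightarrow> (('m::finite,'k) pt \<Rightarrow> real \<Rightarrow> real^'m \<Rightarrow> real^'m^'m \<Rightarrow> real)
     \<Rightarrow> ('m,'k) pt \<Rightarrow> real \<Rightarrow> ('m,'k) pt \<Rightarrow> real^('m+'k)^('m+'k) \<Rightarrow> real" where
  "G_low B F x t p A =
     Lim (at_right 0) (\<lambda>r. Inf {G_op B F y t p' A' | y p' A'. p' v* sigma B y \<noteq> 0 \<and> symm_mat A' \<and>
                                  dist ((y, p'), A') ((x, p), A) \<le> r})"

definition G_up :: "('k::finite \<Rightarrow> real ^ 'm ^ 'm)
     \<Rightarrow> (('m::finite,'k) pt \<Rightarrow> real \<Rightarrow> real^'m \<Rightarrow> real^'m^'m \<Rightarrow> real)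
     \<Rightarrow> ('m,'k) pt \<Rightarrow> real \<Rightarrow> ('m,'k) pt \<Rightarrow> real^('m+'k)^('m+'k) \<Rightarrow> real" where
  "G_up B F x t p A =
     Lim (at_right 0) (\<lambda>r. Sup {G_op B F y t p' A' | y p' A'. p' v* sigma B y \<noteq> 0 \<and> symm_mat A' \<and>
                                  dist ((y, p'), A') ((x, p), A) \<le> r})"

definition dom :: "(('m::finite,'k::finite) pt \<times> real) set" where
  "dom = UNIV \<times> {0<..}"

definition pd :: "('a::real_normed_vector \<Rightarrow> real) \<Rightarrow> 'a \<Rightarrow> 'a \<Rightarrow> real" where
  "pd f v z = frechet_derivative f (at z) v"

definition C2_on :: "('a::euclidean_space \<Rightarrow> real) \<Rightarrow> 'a set \<Rightarrow> bool" where
  "C2_on f U \<longleftrightarrow> (\<forall>z\<in>U. f differentiable (at z)) \<and>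
                  (\<forall>v. \<forall>z\<in>U. pd f v differentiable (at z)) \<and>
                  (\<forall>v w. continuous_on U (pd (pd f v) w))"

definition grad_x :: "(('m::finite,'k::finite) pt \<times> real \<Rightarrow> real) \<Rightarrow> ('m,'k) pt \<times> real \<Rightarrow> ('m,'k) pt" where
  "grad_x \<phi> z = (\<chi> i. pd \<phi> (axis i 1, 0) z)"

definition hess_x :: "(('m::finite,'k::finite) pt \<times> real \<Rightarrow> real) \<Rightarrow> ('m,'k) pt \<times> real
     \<Rightarrow> real^('m+'k)^('m+'k)" where
  "hess_x \<phi> z = (\<chi> i j. pd (pd \<phi> (axis i 1, 0)) (axis j 1, 0) z)"

definition d_t :: "(('m::finite,'k::finite) pt \<times> real \<Rightarrow> real) \<Rightarrow> ('m,'k) pt \<times> real \<Rightarrow> real" where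
  "d_t \<phi> z = pd \<phi> (0, 1) z"

definition usc_on :: "('a::topological_space \<Rightarrow> real) \<Rightarrow> 'a set \<Rightarrow> bool" where
  "usc_on u S \<longleftrightarrow> (\<forall>a. openin (top_of_set S) {z\<in>S. u z < a})"

definition lsc_on :: "('a::topological_space \<Rightarrow> real) \<Rightarrow> 'a set \<Rightarrow> bool" where
  "lsc_on u S \<longleftrightarrow> (\<forall>a. openin (top_of_set S) {z\<in>S. u z > a})"

definition loc_max_on :: "('a::metric_space \<Rightarrow> real) \<Rightarrow> 'a set \<Rightarrow> 'a \<Rightarrow> bool" where
  "loc_max_on f S z \<longleftrightarrow> z \<in> S \<and> (\<exists>e>0. \<forall>w\<in>S. dist w z < e \<longrightarrow> f w \<le> f z)"

definition loc_min_on :: "('a::metric_space \<Rightarrow> real) \<Rightarrow> 'a set \<Rightarrow> 'a \<Rightarrow> bool" where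
  "loc_min_on f S z \<longleftrightarrow> z \<in> S \<and> (\<exists>e>0. \<forall>w\<in>S. dist w z < e \<longrightarrow> f w \<ge> f z)"

text \<open>Viscosity sub/supersolutions of u_t + G(x,t,Du,D^2u) = 0, i.e. of u_t + F(x,t,Xu,X^2u) = 0.\<close>
definition visc_sub :: "('k::finite \<Rightarrow> real ^ 'm ^ 'm)
     \<Rightarrow> (('m::finite,'k) pt \<Rightarrow> real \<Rightarrow> real^'m \<Rightarrow> real^'m^'m \<Rightarrow> real)
     \<Rightarrow> (('m,'k) pt \<times> real \<Rightarrow> real) \<Rightarrow> bool" where
  "visc_sub B F u \<longleftrightarrow> usc_on u dom \<and>
     (\<forall>\<phi> x t. C2_on \<phi> dom \<and> loc_max_on (\<lambda>z. u z - \<phi> z) dom (x, t) \<longrightarrow>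
        d_t \<phi> (x, t) + G_low B F x t (grad_x \<phi> (x, t)) (hess_x \<phi> (x, t)) \<le> 0)"

definition visc_super :: "('k::finite \<Rightarrow> real ^ 'm ^ 'm)
     \<Rightarrow> (('m::finite,'k) pt \<Rightarrow> real \<Rightarrow> real^'m \<Rightarrow> real^'m^'m \<Rightarrow> real)
     \<Rightarrow> (('m,'k) pt \<times> real \<Rightarrow> real) \<Rightarrow> bool" where
  "visc_super B F u \<longleftrightarrow> lsc_on u dom \<and>
     (\<forall>\<phi> x t. C2_on \<phi> dom \<and> loc_min_on (\<lambda>z. u z - \<phi> z) dom (x, t) \<longrightarrow>
        d_t \<phi> (x, t) + G_up B F x t (grad_x \<phi> (x, t)) (hess_x \<phi> (x, t)) \<ge> 0)"

end

theory Submission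
  imports Defs
begin

(*
  G_* and G^* are limits, as r -> 0, of infima and suprema of G over the r-neighbourhoods of
  (x, p, A).  The maps p |-> p sigma(y) and A |-> sigma(y)^T A sigma(y) are continuous in all
  variables and have continuous right inverses that change only horizontal components, uniformly
  in y; so these neighbourhoods are mutually cofinal with the neighbourhoods of
  (x, p sigma(x), sigma(x)^T A sigma(x)) defining F_* and F^*, and the envelopes agree.  At a test
  function the Hessian is symmetric by Schwarz's theorem, so this applies to (D phi, D^2 phi),
  and the two notions of sub- and supersolution coincide.
*)

section \<open>Limits of infima and suprema over shrinking neighbourhoods\<close>

lemma Sup_real_eq_uminus_Inf: "Sup (X::real set) = - Inf (uminus ` X)"
  by (simp add: Inf_real_def image_image)

lemma Inf_radius_tendsto:
  fixes S :: "real \<Rightarrow> real set"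
  assumes mono: "mono_on {0<..} S" and ne: "\<And>r. 0 < r \<Longrightarrow> S r \<noteq> {}"
    and R: "0 < R" and bdd: "bdd_below (S R)" "bdd_above (S R)"
  shows "\<exists>L. ((\<lambda>r. Inf (S r)) \<longlongrightarrow> L) (at_right 0)"
proof -
  have sub: "S r \<subseteq> S r'" if "0 < r" "r \<le> r'" for r r'
    using mono_onD[OF mono] that by simp
  obtain M where M: "\<And>v. v \<in> S R \<Longrightarrow> v \<le> M" using bdd(2) by (auto simp: bdd_above_def)
  have antitone: "Inf (S r') \<le> Inf (S r)" if "0 < r" "r \<le> r'" "r' \<le> R" for r r'
    using sub that ne bdd_below_mono[OF bdd(1) sub[of r' R]] by (intro cInf_superset_mono) auto
  have below_M: "Inf (S r) \<le> M" if "0 < r" "r \<le> R" for r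
  proof -
    obtain v where "v \<in> S r" using ne \<open>0 < r\<close> by blast
    then show ?thesis
      using M sub[OF that] bdd_below_mono[OF bdd(1) sub[OF that]] by (meson cInf_lower2 subsetD)
  qed
  define L where "L = Sup ((\<lambda>r. Inf (S r)) ` {0<..R})"
  have bdd_above_Infs: "bdd_above ((\<lambda>r. Inf (S r)) ` {0<..R})"
    using below_M by (intro bdd_aboveI[of _ M]) auto
  have le_L: "Inf (S r) \<le> L" if "0 < r" "r \<le> R" for r
    unfolding L_def using bdd_above_Infs that by (intro cSup_upper) auto
  have "((\<lambda>r. Inf (S r)) \<longlongrightarrow> L) (at_right 0)"
  proof (rule increasing_tendsto)
    show "\<forall>\<^sub>F r in at_right 0. Inf (S r) \<le> L"
      unfolding eventually_at_right_field using R le_L by (intro exI[of _ R]) auto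
  next
    fix a assume "a < L"
    then obtain r1 where r1: "0 < r1" "r1 \<le> R" "a < Inf (S r1)"
      using less_cSup_iff[OF _ bdd_above_Infs] R unfolding L_def by auto
    show "\<forall>\<^sub>F r in at_right 0. a < Inf (S r)"
      unfolding eventually_at_right_field
      using r1 antitone by (intro exI[of _ r1]) (auto intro: less_le_trans)
  qed
  then show ?thesis ..
qed

lemma Inf_radius_tendsto_cofinal:
  fixes S T :: "real \<Rightarrow> real set"
  assumes monoS: "mono_on {0<..} S" and monoT: "mono_on {0<..} T"
    and ne: "\<And>r. 0 < r \<Longrightarrow> S r \<noteq> {}"
    and R: "0 < R" and bdd: "bdd_below (S R)"
    and TS: "\<And>r. 0 < r \<Longrightarrow> \<exists>d>0. T d \<subseteq> S r"
    and ST: "\<And>r. 0 < r \<Longrightarrow> \<exists>d>0. S d \<subseteq> T r"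
    and lim: "((\<lambda>r. Inf (S r)) \<longlongrightarrow> L) (at_right 0)"
  shows "((\<lambda>r. Inf (T r)) \<longlongrightarrow> L) (at_right 0)"
proof (rule order_tendstoI)
  fix a assume "a < L"
  then obtain b where b: "0 < b" "\<And>r. 0 < r \<Longrightarrow> r < b \<Longrightarrow> a < Inf (S r)"
    using order_tendstoD(1)[OF lim] unfolding eventually_at_right_field by blast
  define r0 where "r0 = min (b/2) R"
  have r0: "0 < r0" "r0 \<le> R" "a < Inf (S r0)" using b R by (auto simp: r0_def)
  obtain d0 where d0: "0 < d0" "T d0 \<subseteq> S r0" using TS[OF r0(1)] by blast
  have "a < Inf (T d)" if "0 < d" "d < d0" for d
  proof -
    have "T d \<subseteq> S r0" using mono_onD[OF monoT, of d d0] that d0 by auto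
    moreover have "T d \<noteq> {}" using ST[OF \<open>0 < d\<close>] ne by blast
    moreover have "bdd_below (S r0)" using mono_onD[OF monoS, of r0 R] r0 by (auto intro: bdd_below_mono[OF bdd])
    ultimately have "Inf (S r0) \<le> Inf (T d)" by (intro cInf_superset_mono)
    with r0(3) show ?thesis by linarith
  qed
  then show "\<forall>\<^sub>F r in at_right 0. a < Inf (T r)"
    unfolding eventually_at_right_field using d0 by blast
next
  fix a assume "L < a"
  then obtain b where b: "0 < b" "\<And>r. 0 < r \<Longrightarrow> r < b \<Longrightarrow> Inf (S r) < a"
    using order_tendstoD(2)[OF lim] unfolding eventually_at_right_field by blast
  obtain d0 where d0: "0 < d0" "T d0 \<subseteq> S R" using TS[OF R] by blast
  have "Inf (T d) < a" if "0 < d" "d < d0" for d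
  proof -
    obtain d' where d': "0 < d'" "S d' \<subseteq> T d" using ST[OF \<open>0 < d\<close>] by blast
    define r where "r = min d' (b/2)"
    have r: "0 < r" "r < b" using d' b by (auto simp: r_def)
    have "S r \<subseteq> T d" using mono_onD[OF monoS, of r d'] d' r by (auto simp: r_def)
    moreover have "bdd_below (T d)"
      using mono_onD[OF monoT, of d d0] that d0 by (intro bdd_below_mono[OF bdd]) auto
    ultimately have "Inf (T d) \<le> Inf (S r)" using ne[OF r(1)] by (intro cInf_superset_mono)
    with b(2)[OF r] show ?thesis by linarith
  qed
  then show "\<forall>\<^sub>F r in at_right 0. Inf (T r) < a"
    unfolding eventually_at_right_field using d0 by blast
qed

lemma mono_on_uminus_image:
  fixes S :: "real \<Rightarrow> real set"
  shows "mono_on {0<..} S \<Longrightarrow> mono_on {0<..} (\<lambda>r. uminus ` S r)"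
  by (auto simp: mono_on_def)

lemma Sup_radius_tendsto:
  fixes S :: "real \<Rightarrow> real set"
  assumes mono: "mono_on {0<..} S" and ne: "\<And>r. 0 < r \<Longrightarrow> S r \<noteq> {}"
    and R: "0 < R" and bdd: "bdd_below (S R)" "bdd_above (S R)"
  shows "\<exists>L. ((\<lambda>r. Sup (S r)) \<longlongrightarrow> L) (at_right 0)"
proof -
  obtain L where "((\<lambda>r. Inf (uminus ` S r)) \<longlongrightarrow> L) (at_right 0)"
    using Inf_radius_tendsto[OF mono_on_uminus_image[OF mono] _ R] ne bdd by auto
  from tendsto_minus[OF this] show ?thesis by (auto simp: Sup_real_eq_uminus_Inf)
qed

lemma Sup_radius_tendsto_cofinal:
  fixes S T :: "real \<Rightarrow> real set"
  assumes monoS: "mono_on {0<..} S" and monoT: "mono_on {0<..} T"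
    and ne: "\<And>r. 0 < r \<Longrightarrow> S r \<noteq> {}"
    and R: "0 < R" and bdd: "bdd_above (S R)"
    and TS: "\<And>r. 0 < r \<Longrightarrow> \<exists>d>0. T d \<subseteq> S r"
    and ST: "\<And>r. 0 < r \<Longrightarrow> \<exists>d>0. S d \<subseteq> T r"
    and lim: "((\<lambda>r. Sup (S r)) \<longlongrightarrow> L) (at_right 0)"
  shows "((\<lambda>r. Sup (T r)) \<longlongrightarrow> L) (at_right 0)"
proof -
  have "((\<lambda>r. Inf (uminus ` T r)) \<longlongrightarrow> - L) (at_right 0)"
  proof (rule Inf_radius_tendsto_cofinal[OF mono_on_uminus_image[OF monoS]
          mono_on_uminus_image[OF monoT] _ R])
    show "((\<lambda>r. Inf (uminus ` S r)) \<longlongrightarrow> - L) (at_right 0)"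
      using tendsto_minus[OF lim] by (simp add: Sup_real_eq_uminus_Inf)
    show "bdd_below (uminus ` S R)" using bdd by simp
    show "uminus ` S r \<noteq> {}" if "0 < r" for r using ne[OF that] by simp
    show "\<exists>d>0. uminus ` T d \<subseteq> uminus ` S r" if "0 < r" for r using TS[OF that] by blast
    show "\<exists>d>0. uminus ` S d \<subseteq> uminus ` T r" if "0 < r" for r using ST[OF that] by blast
  qed
  from tendsto_minus[OF this] show ?thesis by (simp add: Sup_real_eq_uminus_Inf)
qed

lemma Inf_Sup_radius_tendsto_center:
  fixes S :: "real \<Rightarrow> real set"
  assumes mono: "mono_on {0<..} S" and mem: "\<And>r. 0 < r \<Longrightarrow> c \<in> S r"
    and close: "\<And>e. 0 < e \<Longrightarrow> \<exists>d>0. \<forall>v\<in>S d. \<bar>v - c\<bar> \<le> e"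
  shows "((\<lambda>r. Inf (S r)) \<longlongrightarrow> c) (at_right 0)" "((\<lambda>r. Sup (S r)) \<longlongrightarrow> c) (at_right 0)"
proof -
  have near: "\<forall>\<^sub>F r in at_right 0. \<bar>Inf (S r) - c\<bar> < e \<and> \<bar>Sup (S r) - c\<bar> < e" if "0 < e" for e
  proof -
    obtain d where d: "0 < d" "\<forall>v\<in>S d. \<bar>v - c\<bar> \<le> e/2" using close[of "e/2"] \<open>0 < e\<close> by auto
    have "\<bar>Inf (S r) - c\<bar> < e \<and> \<bar>Sup (S r) - c\<bar> < e" if r: "0 < r" "r < d" for r
    proof -
      have "S r \<subseteq> S d" using mono_onD[OF mono, of r d] r by simp
      with d(2) have within: "\<forall>v\<in>S r. c - e/2 \<le> v \<and> v \<le> c + e/2"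
        by (metis abs_diff_le_iff subsetD)
      then have "bdd_below (S r)" "bdd_above (S r)"
        by (auto intro!: bdd_belowI[of _ "c - e/2"] bdd_aboveI[of _ "c + e/2"])
      with within mem[OF r(1)] have "c - e/2 \<le> Inf (S r)" "Inf (S r) \<le> c"
          "c \<le> Sup (S r)" "Sup (S r) \<le> c + e/2"
        by (auto intro: cInf_greatest cInf_lower cSup_upper cSup_least)
      with \<open>0 < e\<close> show ?thesis by auto
    qed
    with d(1) show ?thesis unfolding eventually_at_right_field by blast
  qed
  show "((\<lambda>r. Inf (S r)) \<longlongrightarrow> c) (at_right 0)" "((\<lambda>r. Sup (S r)) \<longlongrightarrow> c) (at_right 0)"
    unfolding tendsto_iff dist_real_def by (auto elim!: eventually_mono[OF near])
qed

section \<open>Horizontal lifts\<close>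

definition hor_lift :: "real ^ 'm \<Rightarrow> ('m::finite,'k::finite) pt" where
  "hor_lift w = (\<chi> r. case r of Inl i \<Rightarrow> w $ i | Inr _ \<Rightarrow> 0)"

definition hor_block :: "real ^ 'm ^ 'm \<Rightarrow> real ^ ('m::finite + 'k::finite) ^ ('m + 'k)" where
  "hor_block E = (\<chi> a b. case (a, b) of (Inl i, Inl j) \<Rightarrow> E $ i $ j | _ \<Rightarrow> 0)"

lemma hor_lift_0 [simp]: "hor_lift 0 = 0"
  by (simp add: vec_eq_iff hor_lift_def split: sum.split)

lemma hor_block_0 [simp]: "hor_block 0 = 0"
  by (simp add: vec_eq_iff hor_block_def split: sum.split)

lemma sum_UNIV_Plus:
  "(\<Sum>r\<in>(UNIV::('a::finite + 'b::finite) set). g r) = (\<Sum>i\<in>UNIV. g (Inl i)) + (\<Sum>k\<in>UNIV. g (Inr k))"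
  by (simp add: UNIV_Plus_UNIV[symmetric] sum.Plus comp_def del: UNIV_Plus_UNIV)

lemma hor_lift_vector_sigma: "(hor_lift w :: ('m::finite,'k::finite) pt) v* sigma B y = w"
  by (simp add: vec_eq_iff vector_matrix_mult_def hor_lift_def sigma_def sum_UNIV_Plus
      if_distrib[of "\<lambda>a. a * _"] if_distrib[of "\<lambda>a. _ * a"] cong: if_cong)

lemma sigma_congruence_hor_block:
  "transpose (sigma B y) ** (hor_block E :: real ^ ('m::finite + 'k::finite) ^ ('m + 'k)) ** sigma B y = E"
proof -
  have "transpose (sigma B y) ** (hor_block E :: real ^ ('m + 'k) ^ ('m + 'k))
      = (\<chi> i b. case b of Inl j \<Rightarrow> E $ i $ j | Inr _ \<Rightarrow> 0)"
    by (simp add: vec_eq_iff matrix_matrix_mult_def transpose_def hor_block_def sigma_def sum_UNIV_Plus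
        if_distrib[of "\<lambda>a. a * _"] cong: if_cong split: sum.split)
  then show ?thesis
    by (simp add: vec_eq_iff matrix_matrix_mult_def sigma_def sum_UNIV_Plus
        if_distrib[of "\<lambda>a. _ * a"] cong: if_cong)
qed

lemma matrix_add_rdistrib: "(B + C) ** A = B ** A + C ** (A::real^_^_)"
  by (vector matrix_matrix_mult_def sum.distrib[symmetric] field_simps)

lemma symm_mat_add: "symm_mat A \<Longrightarrow> symm_mat B \<Longrightarrow> symm_mat (A + B)"
  by (simp add: symm_mat_def transpose_def vec_eq_iff)

lemma symm_mat_diff: "symm_mat A \<Longrightarrow> symm_mat B \<Longrightarrow> symm_mat (A - B)"
  by (simp add: symm_mat_def transpose_def vec_eq_iff)

lemma symm_mat_congruence: "symm_mat A \<Longrightarrow> symm_mat (transpose S ** A ** S)"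
  by (simp add: symm_mat_def matrix_transpose_mul matrix_mul_assoc)

lemma symm_mat_hor_block:
  "symm_mat E \<Longrightarrow> symm_mat (hor_block E :: real ^ ('m::finite + 'k::finite) ^ ('m + 'k))"
  by (auto simp: symm_mat_def vec_eq_iff transpose_def hor_block_def split: sum.split)

lemma continuous_on_vector_matrix_mult [continuous_intros]:
  fixes f :: "'a::topological_space \<Rightarrow> real ^ 'n" and g :: "'a \<Rightarrow> real ^ 'm ^ 'n"
  shows "continuous_on S f \<Longrightarrow> continuous_on S g \<Longrightarrow> continuous_on S (\<lambda>z. f z v* g z)"
  unfolding vector_matrix_mult_def by (intro continuous_intros)

lemma continuous_on_matrix_matrix_mult [continuous_intros]:
  fixes f :: "'a::topological_space \<Rightarrow> real ^ 'n ^ 'm" and g :: "'a \<Rightarrow> real ^ 'p ^ 'n"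
  shows "continuous_on S f \<Longrightarrow> continuous_on S g \<Longrightarrow> continuous_on S (\<lambda>z. f z ** g z)"
  unfolding matrix_matrix_mult_def by (intro continuous_intros)

lemma continuous_on_transpose [continuous_intros]:
  fixes f :: "'a::topological_space \<Rightarrow> real ^ 'n ^ 'm"
  shows "continuous_on S f \<Longrightarrow> continuous_on S (\<lambda>z. transpose (f z))"
  unfolding transpose_def by (intro continuous_intros)

lemma continuous_on_hor_lift [continuous_intros]:
  fixes f :: "'a::topological_space \<Rightarrow> real ^ 'm::finite"
  assumes "continuous_on S f"
  shows "continuous_on S (\<lambda>z. hor_lift (f z) :: ('m,'k::finite) pt)"
  unfolding hor_lift_def
proof (intro continuous_on_vec_lambda)
  show "continuous_on S (\<lambda>z. case r of Inl i \<Rightarrow> f z $ i | Inr _ \<Rightarrow> 0)" for r :: "'m + 'k"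
    using assms by (cases r) (simp_all add: continuous_on_component)
qed

lemma continuous_on_hor_block [continuous_intros]:
  fixes f :: "'a::topological_space \<Rightarrow> real ^ 'm::finite ^ 'm"
  assumes "continuous_on S f"
  shows "continuous_on S (\<lambda>z. hor_block (f z) :: real ^ ('m + 'k::finite) ^ ('m + 'k))"
  unfolding hor_block_def
proof (intro continuous_on_vec_lambda)
  show "continuous_on S (\<lambda>z. case (a, b) of (Inl i, Inl j) \<Rightarrow> f z $ i $ j | _ \<Rightarrow> 0)"
    for a b :: "'m + 'k"
    using assms by (cases a; cases b) (simp_all add: continuous_on_component)
qed

lemma continuous_on_sigma [continuous_intros]:
  fixes f :: "'a::topological_space \<Rightarrow> ('m::finite,'k::finite) pt"
  assumes "continuous_on S f"
  shows "continuous_on S (\<lambda>z. sigma B (f z))"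
  unfolding sigma_def
proof (intro continuous_on_vec_lambda)
  show "continuous_on S (\<lambda>z. case r of Inl i \<Rightarrow> (if i = j then 1 else 0)
                                    | Inr k \<Rightarrow> (B k *v hor (f z)) $ j)" for r :: "'m + 'k" and j
    using assms by (cases r) (auto simp: matrix_vector_mult_def hor_def intro!: continuous_intros)
qed

section \<open>The envelopes of F and G\<close>

definition F_near :: "(('m::finite,'k::finite) pt \<Rightarrow> real \<Rightarrow> real^'m \<Rightarrow> real^'m^'m \<Rightarrow> real)
     \<Rightarrow> ('m,'k) pt \<Rightarrow> real \<Rightarrow> real^'m \<Rightarrow> real^'m^'m \<Rightarrow> real \<Rightarrow> real set" where
  "F_near F x t q A r = {F y t q' A' | y q' A'. q' \<noteq> 0 \<and> symm_mat A' \<and>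
                            dist ((y, q'), A') ((x, q), A) \<le> r}"

definition G_near :: "('k::finite \<Rightarrow> real ^ 'm ^ 'm)
     \<Rightarrow> (('m::finite,'k) pt \<Rightarrow> real \<Rightarrow> real^'m \<Rightarrow> real^'m^'m \<Rightarrow> real)
     \<Rightarrow> ('m,'k) pt \<Rightarrow> real \<Rightarrow> ('m,'k) pt \<Rightarrow> real^('m+'k)^('m+'k) \<Rightarrow> real \<Rightarrow> real set" where
  "G_near B F x t p A r = {G_op B F y t p' A' | y p' A'. p' v* sigma B y \<noteq> 0 \<and> symm_mat A' \<and>
                              dist ((y, p'), A') ((x, p), A) \<le> r}"

lemma mono_F_near: "mono (F_near F x t q A)"
  unfolding F_near_def by (intro monoI) fastforce

lemma mono_G_near: "mono (G_near B F x t p A)"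
  unfolding G_near_def by (intro monoI) fastforce

lemma F_low_eq_Lim: "F_low F x t 0 A = Lim (at_right 0) (\<lambda>r. Inf (F_near F x t 0 A r))"
  by (simp add: F_low_def F_near_def)

lemma F_up_eq_Lim: "F_up F x t 0 A = Lim (at_right 0) (\<lambda>r. Sup (F_near F x t 0 A r))"
  by (simp add: F_up_def F_near_def)

lemma G_low_eq_Lim: "G_low B F x t p A = Lim (at_right 0) (\<lambda>r. Inf (G_near B F x t p A r))"
  unfolding G_low_def G_near_def ..

lemma G_up_eq_Lim: "G_up B F x t p A = Lim (at_right 0) (\<lambda>r. Sup (G_near B F x t p A r))"
  unfolding G_up_def G_near_def ..

lemma G_near_subset_F_near:
  fixes B :: "'k::finite \<Rightarrow> real ^ 'm::finite ^ 'm" and x p :: "('m,'k) pt"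
  assumes "0 < r"
  shows "\<exists>d>0. G_near B F x t p A d
           \<subseteq> F_near F x t (p v* sigma B x) (transpose (sigma B x) ** A ** sigma B x) r"
proof -
  define \<Phi> where "\<Phi> z = (case z of ((y, p'), A') \<Rightarrow>
      ((y, p' v* sigma B y), transpose (sigma B y) ** A' ** sigma B y))"
    for z :: "(('m,'k) pt \<times> ('m,'k) pt) \<times> (real ^ ('m + 'k) ^ ('m + 'k))"
  have "continuous_on UNIV \<Phi>"
    unfolding \<Phi>_def case_prod_beta by (intro continuous_intros)
  then obtain d where d: "0 < d"
      "\<And>z. dist z ((x, p), A) < d \<Longrightarrow> dist (\<Phi> z) (\<Phi> ((x, p), A)) < r"
    using assms unfolding continuous_on_iff by blast
  have "G_near B F x t p A (d/2)
          \<subseteq> F_near F x t (p v* sigma B x) (transpose (sigma B x) ** A ** sigma B x) r"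
  proof
    fix v assume "v \<in> G_near B F x t p A (d/2)"
    then obtain y p' A' where v: "v = G_op B F y t p' A'" "p' v* sigma B y \<noteq> 0" "symm_mat A'"
      "dist ((y, p'), A') ((x, p), A) \<le> d/2" unfolding G_near_def by blast
    have "dist (\<Phi> ((y, p'), A')) (\<Phi> ((x, p), A)) < r" using d v(4) by simp
    with v symm_mat_congruence[OF v(3)] show "v \<in> F_near F x t (p v* sigma B x)
        (transpose (sigma B x) ** A ** sigma B x) r"
      unfolding F_near_def G_op_def \<Phi>_def by fastforce
  qed
  with d(1) show ?thesis by (intro exI[of _ "d/2"]) auto
qed

lemma F_near_subset_G_near:
  fixes B :: "'k::finite \<Rightarrow> real ^ 'm::finite ^ 'm" and x p :: "('m,'k) pt"
  assumes "0 < r" and A: "symm_mat A"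
  shows "\<exists>d>0. F_near F x t (p v* sigma B x) (transpose (sigma B x) ** A ** sigma B x) d
           \<subseteq> G_near B F x t p A r"
proof -
  define \<Psi> where "\<Psi> z = (case z of ((y, q'), A') \<Rightarrow>
      ((y, p + hor_lift (q' - p v* sigma B y) :: ('m,'k) pt),
       A + hor_block (A' - transpose (sigma B y) ** A ** sigma B y)))"
    for z :: "(('m,'k) pt \<times> (real ^ 'm)) \<times> (real ^ 'm ^ 'm)"
  let ?z0 = "((x, p v* sigma B x), transpose (sigma B x) ** A ** sigma B x)"
  have "continuous_on UNIV \<Psi>"
    unfolding \<Psi>_def case_prod_beta by (intro continuous_intros)
  then obtain d where d: "0 < d" "\<And>z. dist z ?z0 < d \<Longrightarrow> dist (\<Psi> z) (\<Psi> ?z0) < r"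
    using assms unfolding continuous_on_iff by blast
  have \<Psi>_z0: "\<Psi> ?z0 = ((x, p), A)" by (simp add: \<Psi>_def)
  have "F_near F x t (p v* sigma B x) (transpose (sigma B x) ** A ** sigma B x) (d/2)
          \<subseteq> G_near B F x t p A r"
  proof
    fix v assume "v \<in> F_near F x t (p v* sigma B x) (transpose (sigma B x) ** A ** sigma B x) (d/2)"
    then obtain y q' A' where v: "v = F y t q' A'" "q' \<noteq> 0" "symm_mat A'"
      "dist ((y, q'), A') ?z0 \<le> d/2" unfolding F_near_def by blast
    define p'' where "p'' = p + hor_lift (q' - p v* sigma B y)"
    define A'' where "A'' = A + hor_block (A' - transpose (sigma B y) ** A ** sigma B y)"
    have "dist ((y, q'), A') ?z0 < d" using v(4) d(1) by linarith
    then have "dist (\<Psi> ((y, q'), A')) (\<Psi> ?z0) < r" by (rule d(2))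
    then have "dist ((y, p''), A'') ((x, p), A) < r"
      unfolding \<Psi>_z0 by (simp add: \<Psi>_def p''_def A''_def)
    moreover have "p'' v* sigma B y = q'"
      by (simp add: p''_def vector_matrix_left_distrib hor_lift_vector_sigma)
    moreover have "transpose (sigma B y) ** A'' ** sigma B y = A'"
      by (simp add: A''_def matrix_add_ldistrib matrix_add_rdistrib sigma_congruence_hor_block)
    moreover have "symm_mat A''" unfolding A''_def
      by (intro symm_mat_add A symm_mat_hor_block symm_mat_diff v(3) symm_mat_congruence)
    ultimately show "v \<in> G_near B F x t p A r"
      unfolding G_near_def G_op_def using v by fastforce
  qed
  with d(1) show ?thesis by (intro exI[of _ "d/2"]) auto
qed

lemma F_near_nonempty:
  fixes x :: "('m::finite,'k::finite) pt"
  assumes "0 < r" and A: "symm_mat A"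
  shows "F_near F x t q A r \<noteq> {}"
proof -
  define q' where "q' = (if q = 0 then (r/2) *\<^sub>R axis undefined 1 else q)"
  have "q' \<noteq> 0" using \<open>0 < r\<close> by (simp add: q'_def axis_eq_0_iff)
  moreover have "dist ((x, q'), A) ((x, q), A) \<le> r"
    using \<open>0 < r\<close> by (simp add: q'_def dist_Pair_Pair dist_norm)
  ultimately have "F x t q' A \<in> F_near F x t q A r" unfolding F_near_def using A by blast
  then show ?thesis by blast
qed

lemma F_near_close:
  fixes F :: "('m::finite,'k::finite) pt \<Rightarrow> real \<Rightarrow> real^'m \<Rightarrow> real^'m^'m \<Rightarrow> real"
  assumes F_cont: "continuous_on {(((x, t), q), A). t > 0 \<and> q \<noteq> 0 \<and> symm_mat A}
                   (\<lambda>(((x, t), q), A). F x t q A)"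
    and "0 < t" "q \<noteq> 0" "symm_mat A" "0 < e"
  shows "\<exists>d>0. \<forall>v\<in>F_near F x t q A d. \<bar>v - F x t q A\<bar> \<le> e"
proof -
  let ?D = "{(((x, t), q), A). t > 0 \<and> q \<noteq> 0 \<and> symm_mat A}
    :: (((('m,'k) pt \<times> real) \<times> (real^'m)) \<times> (real^'m^'m)) set"
  have "(((x, t), q), A) \<in> ?D" using assms by simp
  then obtain d where d: "0 < d" "\<forall>z\<in>?D. dist z (((x, t), q), A) < d \<longrightarrow>
      dist ((\<lambda>(((x, t), q), A). F x t q A) z) ((\<lambda>(((x, t), q), A). F x t q A) (((x, t), q), A)) < e"
    using F_cont \<open>0 < e\<close> unfolding continuous_on_iff by blast
  have "\<bar>v - F x t q A\<bar> \<le> e" if v_in: "v \<in> F_near F x t q A (d/2)" for v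
  proof -
    obtain y q' A' where v: "v = F y t q' A'" "q' \<noteq> 0" "symm_mat A'"
      "dist ((y, q'), A') ((x, q), A) \<le> d/2" using v_in unfolding F_near_def by blast
    have "dist (((y, t), q'), A') (((x, t), q), A) < d"
      using v(4) d(1) by (simp add: dist_Pair_Pair)
    then have "dist (F y t q' A') (F x t q A) < e"
      using d(2)[rule_format, of "(((y, t), q'), A')"] v(2,3) \<open>0 < t\<close> by simp
    with v(1) show ?thesis by (simp add: dist_real_def)
  qed
  with d(1) show ?thesis by (intro exI[of _ "d/2"]) auto
qed

lemma F_near_bounded:
  fixes F :: "('m::finite,'k::finite) pt \<Rightarrow> real \<Rightarrow> real^'m \<Rightarrow> real^'m^'m \<Rightarrow> real"
  assumes F_cont: "continuous_on {(((x, t), q), A). t > 0 \<and> q \<noteq> 0 \<and> symm_mat A}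
                   (\<lambda>(((x, t), q), A). F x t q A)"
    and F_locbdd: "\<And>x t A. t > 0 \<Longrightarrow> symm_mat A \<Longrightarrow>
        \<exists>r>0. \<exists>M. \<forall>y s q A'. s > 0 \<and> q \<noteq> 0 \<and> symm_mat A' \<and>
              dist (((y, s), q), A') (((x, t), 0), A) \<le> r \<longrightarrow> \<bar>F y s q A'\<bar> \<le> M"
    and t: "0 < t" and A: "symm_mat A"
  shows "\<exists>R>0. bdd_below (F_near F x t q A R) \<and> bdd_above (F_near F x t q A R)"
proof -
  show ?thesis
  proof (cases "q = 0")
    case True
    obtain r M where "0 < r" and M: "\<forall>y s q' A'. s > 0 \<and> q' \<noteq> 0 \<and> symm_mat A' \<and>
              dist (((y, s), q'), A') (((x, t), 0), A) \<le> r \<longrightarrow> \<bar>F y s q' A'\<bar> \<le> M"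
      using F_locbdd[OF t A] by blast
    have "\<bar>v\<bar> \<le> M" if v_in: "v \<in> F_near F x t q A r" for v
    proof -
      obtain y q' A' where v: "v = F y t q' A'" "q' \<noteq> 0" "symm_mat A'"
        "dist ((y, q'), A') ((x, q), A) \<le> r" using v_in unfolding F_near_def by blast
      with M[rule_format, of t q' A' y] t True show ?thesis by (simp add: dist_Pair_Pair)
    qed
    with \<open>0 < r\<close> show ?thesis
      by (intro exI[of _ r] conjI bdd_belowI[of _ "- M"] bdd_aboveI[of _ M]) force+
  next
    case False
    then obtain d where "0 < d" "\<forall>v\<in>F_near F x t q A d. \<bar>v - F x t q A\<bar> \<le> 1"
      using F_near_close[OF F_cont t False A, of 1] by auto
    then show ?thesis
      by (intro exI[of _ d] conjI bdd_belowI[of _ "F x t q A - 1"] bdd_aboveI[of _ "F x t q A + 1"])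
        force+
  qed
qed

lemma Lim_at_right_eq: "(f \<longlongrightarrow> L) (at_right (a::real)) \<Longrightarrow> Lim (at_right a) f = L"
  by (simp add: tendsto_Lim)

lemma F_near_tendsto_F_low_F_up:
  fixes F :: "('m::finite,'k::finite) pt \<Rightarrow> real \<Rightarrow> real^'m \<Rightarrow> real^'m^'m \<Rightarrow> real"
  assumes F_cont: "continuous_on {(((x, t), q), A). t > 0 \<and> q \<noteq> 0 \<and> symm_mat A}
                   (\<lambda>(((x, t), q), A). F x t q A)"
    and F_locbdd: "\<And>x t A. t > 0 \<Longrightarrow> symm_mat A \<Longrightarrow>
        \<exists>r>0. \<exists>M. \<forall>y s q A'. s > 0 \<and> q \<noteq> 0 \<and> symm_mat A' \<and>
              dist (((y, s), q), A') (((x, t), 0), A) \<le> r \<longrightarrow> \<bar>F y s q A'\<bar> \<le> M"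
    and t: "0 < t" and A: "symm_mat A"
  shows "((\<lambda>r. Inf (F_near F x t q A r)) \<longlongrightarrow> F_low F x t q A) (at_right 0)"
    and "((\<lambda>r. Sup (F_near F x t q A r)) \<longlongrightarrow> F_up F x t q A) (at_right 0)"
proof -
  have mono: "mono_on {0<..} (F_near F x t q A)" by (rule mono_imp_mono_on[OF mono_F_near])
  have "((\<lambda>r. Inf (F_near F x t q A r)) \<longlongrightarrow> F_low F x t q A) (at_right 0) \<and>
        ((\<lambda>r. Sup (F_near F x t q A r)) \<longlongrightarrow> F_up F x t q A) (at_right 0)"
  proof (cases "q = 0")
    case True
    have "\<exists>R>0. bdd_below (F_near F x t q A R) \<and> bdd_above (F_near F x t q A R)"
      by (rule F_near_bounded[OF F_cont _ t A]) (rule F_locbdd)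
    then obtain R where R: "0 < R" "bdd_below (F_near F x t q A R)" "bdd_above (F_near F x t q A R)"
      by blast
    have ne: "F_near F x t q A r \<noteq> {}" if "0 < r" for r
      using F_near_nonempty[OF that A] .
    obtain L where "((\<lambda>r. Inf (F_near F x t q A r)) \<longlongrightarrow> L) (at_right 0)"
      using Inf_radius_tendsto[OF mono ne R] by blast
    moreover obtain L' where "((\<lambda>r. Sup (F_near F x t q A r)) \<longlongrightarrow> L') (at_right 0)"
      using Sup_radius_tendsto[OF mono ne R] by blast
    ultimately show ?thesis
      using True by (simp add: F_low_eq_Lim F_up_eq_Lim Lim_at_right_eq)
  next
    case False
    have "F x t q A \<in> F_near F x t q A r" if "0 < r" for r
      unfolding F_near_def using False A that by force
    from Inf_Sup_radius_tendsto_center[OF mono this F_near_close[OF F_cont t False A]]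
    show ?thesis using False by (simp add: F_low_def F_up_def)
  qed
  then show "((\<lambda>r. Inf (F_near F x t q A r)) \<longlongrightarrow> F_low F x t q A) (at_right 0)"
    and "((\<lambda>r. Sup (F_near F x t q A r)) \<longlongrightarrow> F_up F x t q A) (at_right 0)" by auto
qed

lemma G_envelopes_eq_F_envelopes:
  fixes B :: "'k::finite \<Rightarrow> real ^ 'm ^ 'm"
    and F :: "('m::finite,'k) pt \<Rightarrow> real \<Rightarrow> real^'m \<Rightarrow> real^'m^'m \<Rightarrow> real"
  assumes F_cont: "continuous_on {(((x, t), q), A). t > 0 \<and> q \<noteq> 0 \<and> symm_mat A}
                   (\<lambda>(((x, t), q), A). F x t q A)"
    and F_locbdd: "\<And>x t A. t > 0 \<Longrightarrow> symm_mat A \<Longrightarrow>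
        \<exists>r>0. \<exists>M. \<forall>y s q A'. s > 0 \<and> q \<noteq> 0 \<and> symm_mat A' \<and>
              dist (((y, s), q), A') (((x, t), 0), A) \<le> r \<longrightarrow> \<bar>F y s q A'\<bar> \<le> M"
    and t: "0 < t" and A: "symm_mat A"
  shows "G_low B F x t p A = F_low F x t (p v* sigma B x) (transpose (sigma B x) ** A ** sigma B x)"
    and "G_up B F x t p A = F_up F x t (p v* sigma B x) (transpose (sigma B x) ** A ** sigma B x)"
proof -
  define q where "q = p v* sigma B x"
  define A\<sigma> where "A\<sigma> = transpose (sigma B x) ** A ** sigma B x"
  have A\<sigma>: "symm_mat A\<sigma>" unfolding A\<sigma>_def by (rule symm_mat_congruence[OF A])
  have "\<exists>R>0. bdd_below (F_near F x t q A\<sigma> R) \<and> bdd_above (F_near F x t q A\<sigma> R)"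
    by (rule F_near_bounded[OF F_cont _ t A\<sigma>]) (rule F_locbdd)
  then obtain R where R: "0 < R" "bdd_below (F_near F x t q A\<sigma> R)" "bdd_above (F_near F x t q A\<sigma> R)"
    by blast
  have lim_F: "((\<lambda>r. Inf (F_near F x t q A\<sigma> r)) \<longlongrightarrow> F_low F x t q A\<sigma>) (at_right 0)"
      "((\<lambda>r. Sup (F_near F x t q A\<sigma> r)) \<longlongrightarrow> F_up F x t q A\<sigma>) (at_right 0)"
    by (rule F_near_tendsto_F_low_F_up[OF F_cont _ t A\<sigma>], rule F_locbdd, assumption+)+
  note mono_near = mono_imp_mono_on[OF mono_F_near] mono_imp_mono_on[OF mono_G_near]
  have ne: "F_near F x t q A\<sigma> r \<noteq> {}" if "0 < r" for r
    by (rule F_near_nonempty[OF that A\<sigma>])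
  have GF: "\<exists>d>0. G_near B F x t p A d \<subseteq> F_near F x t q A\<sigma> r" if "0 < r" for r
    unfolding q_def A\<sigma>_def by (rule G_near_subset_F_near[OF that])
  have FG: "\<exists>d>0. F_near F x t q A\<sigma> d \<subseteq> G_near B F x t p A r" if "0 < r" for r
    unfolding q_def A\<sigma>_def by (rule F_near_subset_G_near[OF that A])
  have "((\<lambda>r. Inf (G_near B F x t p A r)) \<longlongrightarrow> F_low F x t q A\<sigma>) (at_right 0)"
    by (rule Inf_radius_tendsto_cofinal[OF mono_near ne R(1,2) GF FG lim_F(1)])
  moreover have "((\<lambda>r. Sup (G_near B F x t p A r)) \<longlongrightarrow> F_up F x t q A\<sigma>) (at_right 0)"
    by (rule Sup_radius_tendsto_cofinal[OF mono_near ne R(1,3) GF FG lim_F(2)])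
  ultimately show "G_low B F x t p A = F_low F x t (p v* sigma B x) (transpose (sigma B x) ** A ** sigma B x)"
    and "G_up B F x t p A = F_up F x t (p v* sigma B x) (transpose (sigma B x) ** A ** sigma B x)"
    unfolding q_def A\<sigma>_def by (simp_all add: G_low_eq_Lim G_up_eq_Lim Lim_at_right_eq)
qed

section \<open>Symmetry of the Hessian\<close>

lemma has_real_derivative_pd_along_line:
  fixes f :: "'a::real_normed_vector \<Rightarrow> real"
  assumes "f differentiable (at (a + s *\<^sub>R v))"
  shows "((\<lambda>s. f (a + s *\<^sub>R v)) has_real_derivative pd f v (a + s *\<^sub>R v)) (at s)"
proof -
  let ?D = "frechet_derivative f (at (a + s *\<^sub>R v))"
  have fD: "(f has_derivative ?D) (at (a + s *\<^sub>R v))" using assms frechet_derivative_works by blast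
  have "((\<lambda>s. a + s *\<^sub>R v) has_derivative (\<lambda>h. h *\<^sub>R v)) (at s)"
    by (auto intro!: derivative_eq_intros)
  from diff_chain_at[OF this fD]
  have "((\<lambda>s. f (a + s *\<^sub>R v)) has_derivative (\<lambda>h. ?D (h *\<^sub>R v))) (at s)"
    by (simp add: comp_def)
  moreover have "(\<lambda>h. ?D (h *\<^sub>R v)) = (\<lambda>h. pd f v (a + s *\<^sub>R v) * h)"
    using linear.scaleR[OF has_derivative_linear[OF fD]] by (auto simp: pd_def fun_eq_iff mult.commute)
  ultimately show ?thesis unfolding has_field_derivative_def by simp
qed

lemma add_scaleR_mem_ball:
  fixes v w z :: "'a::real_normed_vector"
  assumes "0 \<le> a" "a \<le> h" "0 \<le> b" "b \<le> h" "h * (norm v + norm w) < e"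
  shows "z + a *\<^sub>R v + b *\<^sub>R w \<in> ball z e"
proof -
  have "norm (a *\<^sub>R v + b *\<^sub>R w) \<le> a * norm v + b * norm w"
    using norm_triangle_ineq[of "a *\<^sub>R v" "b *\<^sub>R w"] assms by simp
  also have "\<dots> \<le> h * norm v + h * norm w"
    using assms by (intro add_mono mult_right_mono) auto
  also have "\<dots> < e" using assms by (simp add: distrib_left)
  finally show ?thesis by (simp add: dist_norm norm_minus_commute algebra_simps)
qed

lemma second_difference_mean_value:
  fixes f :: "'a::real_normed_vector \<Rightarrow> real"
  assumes df: "\<And>y. y \<in> ball z e \<Longrightarrow> f differentiable (at y)"
    and ddf: "\<And>y. y \<in> ball z e \<Longrightarrow> pd f v differentiable (at y)"
    and h: "0 < h" "h * (norm v + norm w) < e"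
  shows "\<exists>\<xi> \<eta>. 0 < \<xi> \<and> \<xi> < h \<and> 0 < \<eta> \<and> \<eta> < h \<and>
     f (z + h *\<^sub>R w + h *\<^sub>R v) - f (z + h *\<^sub>R v) - f (z + h *\<^sub>R w) + f z
       = h * (h * pd (pd f v) w (z + \<xi> *\<^sub>R v + \<eta> *\<^sub>R w))"
proof -
  have inb: "z + a *\<^sub>R v + b *\<^sub>R w \<in> ball z e" if "0 \<le> a" "a \<le> h" "0 \<le> b" "b \<le> h" for a b
    using add_scaleR_mem_ball that h(2) by blast
  define g where "g s = f ((z + h *\<^sub>R w) + s *\<^sub>R v) - f (z + s *\<^sub>R v)" for s
  define g' where "g' s = pd f v ((z + h *\<^sub>R w) + s *\<^sub>R v) - pd f v (z + s *\<^sub>R v)" for s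
  have "DERIV g s :> g' s" if "0 \<le> s" "s \<le> h" for s
  proof -
    have "f differentiable (at ((z + h *\<^sub>R w) + s *\<^sub>R v))"
      using df inb[of s h] that h(1) by (simp add: algebra_simps)
    moreover have "f differentiable (at (z + s *\<^sub>R v))"
      using df inb[of s 0] that h(1) by simp
    ultimately show ?thesis unfolding g_def g'_def
      by (intro derivative_intros has_real_derivative_pd_along_line)
  qed
  then obtain \<xi> where \<xi>: "0 < \<xi>" "\<xi> < h" "g h - g 0 = h * g' \<xi>"
    using MVT2[OF h(1), of g g'] by auto
  define k where "k s = pd f v ((z + \<xi> *\<^sub>R v) + s *\<^sub>R w)" for s
  define k' where "k' s = pd (pd f v) w ((z + \<xi> *\<^sub>R v) + s *\<^sub>R w)" for s
  have "DERIV k s :> k' s" if "0 \<le> s" "s \<le> h" for s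
    unfolding k_def k'_def
    by (rule has_real_derivative_pd_along_line, rule ddf, rule inb) (use that \<xi> in auto)
  then obtain \<eta> where \<eta>: "0 < \<eta>" "\<eta> < h" "k h - k 0 = h * k' \<eta>"
    using MVT2[OF h(1), of k k'] by auto
  have "g' \<xi> = k h - k 0"
    unfolding g'_def k_def by (simp add: algebra_simps)
  with \<xi> \<eta> have "g h - g 0 = h * (h * k' \<eta>)" by simp
  moreover have "g h - g 0 = f (z + h *\<^sub>R w + h *\<^sub>R v) - f (z + h *\<^sub>R v) - f (z + h *\<^sub>R w) + f z"
    unfolding g_def by simp
  ultimately show ?thesis using \<xi> \<eta> unfolding k'_def by (intro exI[of _ \<xi>] exI[of _ \<eta>]) auto
qed

text \<open>The second difference of f at scale h is h squared times either mixed partial at some point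
  within distance O(h) of z; continuity of both mixed partials at z forces them to agree.\<close>

lemma pd_pd_commute:
  fixes f :: "'a::real_normed_vector \<Rightarrow> real"
  assumes U: "open U" "z \<in> U" and df: "\<forall>y\<in>U. f differentiable (at y)"
    and ddf: "\<forall>v. \<forall>y\<in>U. pd f v differentiable (at y)"
    and cont: "\<forall>v w. continuous_on U (pd (pd f v) w)"
  shows "pd (pd f v) w z = pd (pd f w) v z"
proof (rule ccontr)
  define a where "a = pd (pd f v) w z"
  define b where "b = pd (pd f w) v z"
  assume "pd (pd f v) w z \<noteq> pd (pd f w) v z"
  then have \<epsilon>: "0 < \<bar>a - b\<bar> / 2" unfolding a_def b_def by simp
  obtain e where e: "0 < e" "ball z e \<subseteq> U" using U openE by blast
  obtain d1 where d1: "0 < d1" "\<forall>y\<in>U. dist y z < d1 \<longrightarrow> dist (pd (pd f v) w y) a < \<bar>a - b\<bar> / 2"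
    using cont U(2) \<epsilon> unfolding continuous_on_iff a_def by blast
  obtain d2 where d2: "0 < d2" "\<forall>y\<in>U. dist y z < d2 \<longrightarrow> dist (pd (pd f w) v y) b < \<bar>a - b\<bar> / 2"
    using cont U(2) \<epsilon> unfolding continuous_on_iff b_def by blast
  define r where "r = min e (min d1 d2)"
  have r: "0 < r" "ball z r \<subseteq> U" "r \<le> d1" "r \<le> d2" using e d1 d2 by (auto simp: r_def)
  define h where "h = r / (2 * (norm v + norm w + 1))"
  have den: "0 < 2 * (norm v + norm w + 1)" by (smt (verit) norm_ge_zero)
  have h: "0 < h" unfolding h_def using r(1) den by simp
  have hr: "h * (norm v + norm w) < r" "h * (norm w + norm v) < r"
  proof -
    have "h * (norm v + norm w) \<le> h * (norm v + norm w + 1)" using h by simp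
    also have "\<dots> = r / 2" unfolding h_def using den by (simp add: field_simps)
    finally show "h * (norm v + norm w) < r" "h * (norm w + norm v) < r"
      using r(1) by (simp_all add: add.commute)
  qed
  have df': "\<And>y. y \<in> ball z r \<Longrightarrow> f differentiable (at y)"
    and ddf': "\<And>u y. y \<in> ball z r \<Longrightarrow> pd f u differentiable (at y)" using df ddf r(2) by auto
  obtain \<xi> \<eta> where 1: "0 < \<xi>" "\<xi> < h" "0 < \<eta>" "\<eta> < h"
     "f (z + h *\<^sub>R w + h *\<^sub>R v) - f (z + h *\<^sub>R v) - f (z + h *\<^sub>R w) + f z
       = h * (h * pd (pd f v) w (z + \<xi> *\<^sub>R v + \<eta> *\<^sub>R w))"
    using second_difference_mean_value[OF df' ddf' h hr(1)] by blast
  obtain \<xi>' \<eta>' where 2: "0 < \<xi>'" "\<xi>' < h" "0 < \<eta>'" "\<eta>' < h"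
     "f (z + h *\<^sub>R v + h *\<^sub>R w) - f (z + h *\<^sub>R w) - f (z + h *\<^sub>R v) + f z
       = h * (h * pd (pd f w) v (z + \<xi>' *\<^sub>R w + \<eta>' *\<^sub>R v))"
    using second_difference_mean_value[OF df' ddf' h hr(2)] by blast
  have "f (z + h *\<^sub>R v + h *\<^sub>R w) = f (z + h *\<^sub>R w + h *\<^sub>R v)" by (simp add: algebra_simps)
  with 1(5) 2(5) have "h * (h * pd (pd f v) w (z + \<xi> *\<^sub>R v + \<eta> *\<^sub>R w))
      = h * (h * pd (pd f w) v (z + \<xi>' *\<^sub>R w + \<eta>' *\<^sub>R v))" by linarith
  with h have eq: "pd (pd f v) w (z + \<xi> *\<^sub>R v + \<eta> *\<^sub>R w)
      = pd (pd f w) v (z + \<xi>' *\<^sub>R w + \<eta>' *\<^sub>R v)" by simp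
  have "z + \<xi> *\<^sub>R v + \<eta> *\<^sub>R w \<in> ball z r" "z + \<xi>' *\<^sub>R w + \<eta>' *\<^sub>R v \<in> ball z r"
    using 1 2 hr by (intro add_scaleR_mem_ball; simp)+
  with d1(2) d2(2) r have "dist (pd (pd f v) w (z + \<xi> *\<^sub>R v + \<eta> *\<^sub>R w)) a < \<bar>a - b\<bar> / 2"
      "dist (pd (pd f w) v (z + \<xi>' *\<^sub>R w + \<eta>' *\<^sub>R v)) b < \<bar>a - b\<bar> / 2"
    by (auto simp: dist_commute)
  with eq show False unfolding dist_real_def by (simp add: abs_if split: if_splits)
qed

lemma open_dom: "open (dom :: (('m::finite,'k::finite) pt \<times> real) set)"
  unfolding dom_def by (intro open_Times) auto

lemma symm_mat_hess_x:
  fixes \<phi> :: "('m::finite,'k::finite) pt \<times> real \<Rightarrow> real"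
  assumes "C2_on \<phi> dom" "z \<in> dom"
  shows "symm_mat (hess_x \<phi> z)"
proof -
  have "pd (pd \<phi> u) u' z = pd (pd \<phi> u') u z" for u u'
    using assms open_dom unfolding C2_on_def by (intro pd_pd_commute) auto
  then show ?thesis unfolding symm_mat_def hess_x_def transpose_def by (simp add: vec_eq_iff)
qed

theorem corollary3p4:
  fixes B :: "'k::finite \<Rightarrow> real ^ 'm ^ 'm"
    and F :: "('m::finite,'k) pt \<Rightarrow> real \<Rightarrow> real^'m \<Rightarrow> real^'m^'m \<Rightarrow> real"
    and u :: "('m,'k) pt \<times> real \<Rightarrow> real"
  assumes m2: "CARD('m) \<ge> 2"
    and skew: "\<And>k. skew_mat (B k)"
    and indep: "lin_indep_family B"
    and F_cont: "continuous_on {(((x, t), q), A). t > 0 \<and> q \<noteq> 0 \<and> symm_mat A}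
                   (\<lambda>(((x, t), q), A). F x t q A)"
    and F_locbdd: "\<And>x t A. t > 0 \<Longrightarrow> symm_mat A \<Longrightarrow>
        \<exists>r>0. \<exists>M. \<forall>y s q A'. s > 0 \<and> q \<noteq> 0 \<and> symm_mat A' \<and>
              dist (((y, s), q), A') (((x, t), 0), A) \<le> r \<longrightarrow> \<bar>F y s q A'\<bar> \<le> M"
    and F1: "\<And>x t. t > 0 \<Longrightarrow> F_up F x t 0 0 = F_low F x t 0 0"
    and F2: "\<And>x t p A A'. t > 0 \<Longrightarrow> p \<noteq> 0 \<Longrightarrow> symm_mat A \<Longrightarrow> symm_mat A' \<Longrightarrow>
               mat_ge A A' \<Longrightarrow> F x t p A \<le> F x t p A'"
    and F3: "\<And>x t p A (c::real) \<mu>. t > 0 \<Longrightarrow> p \<noteq> 0 \<Longrightarrow> symm_mat A \<Longrightarrow> c > 0 \<Longrightarrow>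
               F x t (c *\<^sub>R p) (c *\<^sub>R A + \<mu> *\<^sub>R outer p) = c * F x t p A"
  shows "(usc_on u dom \<longrightarrow>
           (visc_sub B F u \<longleftrightarrow>
             (\<forall>\<phi> x t. C2_on \<phi> dom \<and> loc_max_on (\<lambda>z. u z - \<phi> z) dom (x, t) \<longrightarrow>
                d_t \<phi> (x, t) + F_low F x t (grad_x \<phi> (x, t) v* sigma B x)
                   (transpose (sigma B x) ** hess_x \<phi> (x, t) ** sigma B x) \<le> 0)))
       \<and> (lsc_on u dom \<longrightarrow>
           (visc_super B F u \<longleftrightarrow>
             (\<forall>\<phi> x t. C2_on \<phi> dom \<and> loc_min_on (\<lambda>z. u z - \<phi> z) dom (x, t) \<longrightarrow>
                d_t \<phi> (x, t) + F_up F x t (grad_x \<phi> (x, t) v* sigma B x)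
                   (transpose (sigma B x) ** hess_x \<phi> (x, t) ** sigma B x) \<ge> 0)))"
proof -
  have envelopes:
    "G_low B F x t (grad_x \<phi> (x, t)) (hess_x \<phi> (x, t)) =
       F_low F x t (grad_x \<phi> (x, t) v* sigma B x) (transpose (sigma B x) ** hess_x \<phi> (x, t) ** sigma B x)
     \<and> G_up B F x t (grad_x \<phi> (x, t)) (hess_x \<phi> (x, t)) =
       F_up F x t (grad_x \<phi> (x, t) v* sigma B x) (transpose (sigma B x) ** hess_x \<phi> (x, t) ** sigma B x)"
    if "C2_on \<phi> dom" "(x, t) \<in> dom" for \<phi> x t
  proof -
    have t: "0 < t" using that(2) by (simp add: dom_def)
    note hess = symm_mat_hess_x[OF that]
    show ?thesis
      by (intro conjI G_envelopes_eq_F_envelopes[OF F_cont _ t hess]) (rule F_locbdd; assumption)+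
  qed
  show ?thesis
    unfolding visc_sub_def visc_super_def using envelopes
    by (auto simp: loc_max_on_def loc_min_on_def)
qed

end
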